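(* Let $s,c\ge 1$ be integers, and suppose that every $s\mathcal{O}$-free graph $G$ with no cycle of length four has at most $|G|^{c}$ ordered induced paths. Then every $s\mathcal{O}$-free graph $G$ has at most $|G|^{d}$ ordered induced paths, where $d=2+(s-1)(c+6)$.
   Context: Graphs are finite and simple; $|G|$ denotes the number of vertices of $G$. Every path has at least one vertex. An ordered induced path is an induced path together with a choice of one of its ends as its first vertex. Two subsets $X,Y$ of $V(G)$ are anticomplete if they are disjoint and no edge joins them; two subgraphs are anticomplete if their vertex sets are. A graph is $s\mathcal{O}$-free if there do not exist $s$ cycles of it that are pairwise vertex-disjoint and pairwise anticomplete. *)

theory Defs
  imports Main
begin

definition graph :: "'a set \<Rightarrow> ('a \<Rightarrow> 'a \<Rightarrow> bool) \<Rightarrow> bool" where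
  "graph V E \<longleftrightarrow> finite V \<and> (\<forall>x y. E x y \<longrightarrow> x \<in> V \<and> y \<in> V \<and> x \<noteq> y \<and> E y x)"

definition is_cycle :: "'a set \<Rightarrow> ('a \<Rightarrow> 'a \<Rightarrow> bool) \<Rightarrow> 'a list \<Rightarrow> bool" where
  "is_cycle V E xs \<longleftrightarrow> length xs \<ge> 3 \<and> distinct xs \<and> set xs \<subseteq> V \<and>
     (\<forall>i < length xs. E (xs ! i) (xs ! ((i + 1) mod length xs)))"

definition anticomplete :: "('a \<Rightarrow> 'a \<Rightarrow> bool) \<Rightarrow> 'a set \<Rightarrow> 'a set \<Rightarrow> bool" where
  "anticomplete E X Y \<longleftrightarrow> X \<inter> Y = {} \<and> (\<forall>x\<in>X. \<forall>y\<in>Y. \<not> E x y)"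

definition sO_free :: "nat \<Rightarrow> 'a set \<Rightarrow> ('a \<Rightarrow> 'a \<Rightarrow> bool) \<Rightarrow> bool" where
  "sO_free s V E \<longleftrightarrow> \<not> (\<exists>Cs. length Cs = s \<and> (\<forall>C\<in>set Cs. is_cycle V E C) \<and>
     (\<forall>i<s. \<forall>j<s. i \<noteq> j \<longrightarrow> anticomplete E (set (Cs ! i)) (set (Cs ! j))))"

definition no_C4 :: "'a set \<Rightarrow> ('a \<Rightarrow> 'a \<Rightarrow> bool) \<Rightarrow> bool" where
  "no_C4 V E \<longleftrightarrow> \<not> (\<exists>xs. is_cycle V E xs \<and> length xs = 4)"

text \<open>An ordered induced path: its vertex sequence starting at the chosen first end.\<close>
definition ordered_induced_path :: "'a set \<Rightarrow> ('a \<Rightarrow> 'a \<Rightarrow> bool) \<Rightarrow> 'a list \<Rightarrow> bool" where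
  "ordered_induced_path V E xs \<longleftrightarrow> xs \<noteq> [] \<and> distinct xs \<and> set xs \<subseteq> V \<and>
     (\<forall>i < length xs. \<forall>j < length xs. E (xs ! i) (xs ! j) \<longleftrightarrow> (i + 1 = j \<or> j + 1 = i))"

definition num_oip :: "'a set \<Rightarrow> ('a \<Rightarrow> 'a \<Rightarrow> bool) \<Rightarrow> nat" where
  "num_oip V E = card {xs. ordered_induced_path V E xs}"

end

theory Submission
  imports Defs
begin

text \<open>Induction on s. For s = 1 the graph is a forest, where an induced path is determined by its
  two ends, so there are at most |G|^2 of them. For the step we may assume that G has a 4-cycle.
  Given an ordered induced path P, take the longest final segment S of P such that the closed
  neighbourhood of S misses some 4-cycle C. Then S is an induced path of G - N[C], which is
  (s-1)O-free, so by induction there are at most |G|^d choices for S. If x is the vertex of P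
  before S and y the one before x, maximality makes G - N[{x} \<union> S] free of 4-cycles, and the part
  of P before y is an induced path of it, with at most |G|^c choices. Together with the at most
  |G|^4/24 vertex sets of 4-cycles and the choices of x and y this gives |G|^(d+c+6).\<close>

section \<open>Induced subgraphs and embeddings\<close>

definition induced_edges :: "('a \<Rightarrow> 'a \<Rightarrow> bool) \<Rightarrow> 'a set \<Rightarrow> 'a \<Rightarrow> 'a \<Rightarrow> bool" where
  "induced_edges E W = (\<lambda>x y. E x y \<and> x \<in> W \<and> y \<in> W)"

definition closed_nbhd :: "('a \<Rightarrow> 'a \<Rightarrow> bool) \<Rightarrow> 'a set \<Rightarrow> 'a set" where
  "closed_nbhd E X = X \<union> {y. \<exists>x\<in>X. E x y}"

definition outside_nbhd :: "'a set \<Rightarrow> ('a \<Rightarrow> 'a \<Rightarrow> bool) \<Rightarrow> 'a set \<Rightarrow> 'a set" where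
  "outside_nbhd V E X = V - closed_nbhd E X"

lemma outside_nbhd_subset: "outside_nbhd V E X \<subseteq> V"
  unfolding outside_nbhd_def by blast

lemma graph_induced_edges: "graph V E \<Longrightarrow> W \<subseteq> V \<Longrightarrow> graph W (induced_edges E W)"
  unfolding graph_def induced_edges_def by (auto intro: finite_subset)

lemma graph_sym: "graph V E \<Longrightarrow> E x y \<Longrightarrow> E y x"
  unfolding graph_def by blast

lemma anticomplete_sym: "graph V E \<Longrightarrow> anticomplete E X Y \<Longrightarrow> anticomplete E Y X"
  unfolding anticomplete_def graph_def by blast

lemma disjoint_closed_nbhd_sym:
  "graph V E \<Longrightarrow> X \<inter> closed_nbhd E Y = {} \<Longrightarrow> Y \<inter> closed_nbhd E X = {}"
  unfolding closed_nbhd_def graph_def by blast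

lemma finite_ordered_induced_paths:
  assumes "finite V" shows "finite {xs. ordered_induced_path V E xs}"
proof -
  have "length xs \<le> card V" if "ordered_induced_path V E xs" for xs
    using that distinct_card card_mono[OF assms] unfolding ordered_induced_path_def by metis
  then have "{xs. ordered_induced_path V E xs} \<subseteq> {xs. set xs \<subseteq> V \<and> length xs \<le> card V}"
    unfolding ordered_induced_path_def by blast
  then show ?thesis using finite_lists_length_le[OF assms] finite_subset by blast
qed

lemma ordered_induced_path_induced_edges:
  "ordered_induced_path V E xs \<Longrightarrow> set xs \<subseteq> W \<Longrightarrow> ordered_induced_path W (induced_edges E W) xs"
  unfolding ordered_induced_path_def induced_edges_def by (auto simp: nth_mem subsetD)

lemma ordered_induced_path_take:
  "ordered_induced_path V E xs \<Longrightarrow> take j xs \<noteq> [] \<Longrightarrow> ordered_induced_path V E (take j xs)"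
  unfolding ordered_induced_path_def using set_take_subset[of j xs] by auto

lemma ordered_induced_path_drop:
  "ordered_induced_path V E xs \<Longrightarrow> drop j xs \<noteq> [] \<Longrightarrow> ordered_induced_path V E (drop j xs)"
  unfolding ordered_induced_path_def using set_drop_subset[of j xs] by auto

locale induced_embedding =
  fixes h :: "'a \<Rightarrow> 'b" and V1 E1 V2 E2
  assumes inj: "inj_on h V1" and image_subset: "h ` V1 \<subseteq> V2"
    and adj_iff: "\<And>x y. x \<in> V1 \<Longrightarrow> y \<in> V1 \<Longrightarrow> E2 (h x) (h y) \<longleftrightarrow> E1 x y"
begin

lemma distinct_map_h: "distinct xs \<Longrightarrow> set xs \<subseteq> V1 \<Longrightarrow> distinct (map h xs)"
  by (simp add: distinct_map inj_on_subset[OF inj])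

lemma is_cycle_map:
  assumes "is_cycle V1 E1 xs" shows "is_cycle V2 E2 (map h xs)"
proof -
  have V: "set xs \<subseteq> V1" using assms unfolding is_cycle_def by blast
  have "E2 (map h xs ! i) (map h xs ! (Suc i mod length xs))" if "i < length xs" for i
  proof -
    have "0 < length xs" using that by linarith
    then have next_lt: "Suc i mod length xs < length xs" by simp
    have "E1 (xs ! i) (xs ! (Suc i mod length xs))" using assms that unfolding is_cycle_def by simp
    then show ?thesis using that next_lt V by (simp add: adj_iff nth_mem subsetD)
  qed
  then show ?thesis
    using assms V image_subset distinct_map_h unfolding is_cycle_def by auto
qed

lemma anticomplete_image:
  assumes "anticomplete E1 X Y" "X \<subseteq> V1" "Y \<subseteq> V1"
  shows "anticomplete E2 (h ` X) (h ` Y)"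
  using assms adj_iff inj_on_image_Int[OF inj assms(2,3)] unfolding anticomplete_def
  by (auto simp: subsetD)

lemma sO_free_reflect:
  assumes "sO_free s V2 E2" shows "sO_free s V1 E1"
  unfolding sO_free_def
proof
  assume "\<exists>Cs. length Cs = s \<and> (\<forall>C\<in>set Cs. is_cycle V1 E1 C) \<and>
     (\<forall>i<s. \<forall>j<s. i \<noteq> j \<longrightarrow> anticomplete E1 (set (Cs ! i)) (set (Cs ! j)))"
  then obtain Cs where Cs: "length Cs = s" "\<forall>C\<in>set Cs. is_cycle V1 E1 C"
     "\<forall>i<s. \<forall>j<s. i \<noteq> j \<longrightarrow> anticomplete E1 (set (Cs ! i)) (set (Cs ! j))" by blast
  have V: "set (Cs ! i) \<subseteq> V1" if "i < s" for i
    using Cs(1,2) that nth_mem unfolding is_cycle_def by blast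
  have "anticomplete E2 (set (map (map h) Cs ! i)) (set (map (map h) Cs ! j))"
    if "i < s" "j < s" "i \<noteq> j" for i j
    using anticomplete_image[OF Cs(3)[rule_format, OF that] V V] that Cs(1) by simp
  moreover have "\<forall>C\<in>set (map (map h) Cs). is_cycle V2 E2 C"
    using Cs(2) is_cycle_map by auto
  moreover have "length (map (map h) Cs) = s" using Cs(1) by simp
  ultimately show False using assms unfolding sO_free_def by blast
qed

lemma no_C4_reflect: "no_C4 V2 E2 \<Longrightarrow> no_C4 V1 E1"
  using is_cycle_map unfolding no_C4_def by (metis length_map)

lemma ordered_induced_path_map:
  assumes "ordered_induced_path V1 E1 xs" shows "ordered_induced_path V2 E2 (map h xs)"
proof -
  have V: "set xs \<subseteq> V1" using assms unfolding ordered_induced_path_def by blast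
  then have "E2 (map h xs ! i) (map h xs ! j) \<longleftrightarrow> E1 (xs ! i) (xs ! j)"
    if "i < length xs" "j < length xs" for i j
    using that by (simp add: adj_iff nth_mem subsetD)
  moreover have "set (map h xs) \<subseteq> V2" using V image_subset by auto
  ultimately show ?thesis
    using assms V distinct_map_h unfolding ordered_induced_path_def by auto
qed

lemma num_oip_le:
  assumes "finite V2" shows "num_oip V1 E1 \<le> num_oip V2 E2"
  unfolding num_oip_def
proof (rule card_inj_on_le)
  show "inj_on (map h) {xs. ordered_induced_path V1 E1 xs}"
  proof (rule inj_onI)
    fix xs ys
    assume "xs \<in> {xs. ordered_induced_path V1 E1 xs}" "ys \<in> {xs. ordered_induced_path V1 E1 xs}"
      and "map h xs = map h ys"
    moreover from this have "set xs \<union> set ys \<subseteq> V1" unfolding ordered_induced_path_def by auto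
    ultimately show "xs = ys" using map_inj_on inj_on_subset[OF inj] by blast
  qed
  show "map h ` {xs. ordered_induced_path V1 E1 xs} \<subseteq> {xs. ordered_induced_path V2 E2 xs}"
    using ordered_induced_path_map by auto
qed (rule finite_ordered_induced_paths[OF assms])

end

lemma induced_embedding_subset:
  assumes "W \<subseteq> V" shows "induced_embedding id W (induced_edges E W) V E"
  using assms by unfold_locales (auto simp: induced_edges_def)

lemma num_oip_bound_transfer_nat:
  assumes bound: "\<forall>(V :: nat set) E. graph V E \<and> sO_free s V E \<and> no_C4 V E
           \<longrightarrow> num_oip V E \<le> card V ^ c"
    and G: "graph (W :: 'a set) E" "sO_free s W E" "no_C4 W E"
  shows "num_oip W E \<le> card W ^ c"
proof -
  define m where "m = card W"
  have "finite W" using G(1) unfolding graph_def by blast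
  then obtain f where f: "bij_betw f W {0..<m}" using ex_bij_betw_finite_nat m_def by blast
  define g where "g = inv_into W f"
  have g: "bij_betw g {0..<m} W" unfolding g_def using bij_betw_inv_into[OF f] .
  have gf: "g (f a) = a" if "a \<in> W" for a
    unfolding g_def using f that by (simp add: bij_betw_def inv_into_f_f)
  define E' where "E' = (\<lambda>x y. x < m \<and> y < m \<and> E (g x) (g y))"
  have "graph {0..<m} E'"
    using G(1) unfolding graph_def E'_def by auto
  then interpret to_W: induced_embedding g "{0..<m}" E' W E
    using g unfolding bij_betw_def E'_def by unfold_locales auto
  interpret from_W: induced_embedding f W E "{0..<m}" E'
    using G(1) f gf unfolding bij_betw_def E'_def by unfold_locales (auto simp: graph_def)
  have "num_oip W E \<le> num_oip {0..<m} E'" using from_W.num_oip_le by simp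
  also have "\<dots> \<le> card {0..<m} ^ c"
    using bound \<open>graph {0..<m} E'\<close> to_W.sO_free_reflect[OF G(2)] to_W.no_C4_reflect[OF G(3)] by blast
  finally show ?thesis unfolding m_def by simp
qed

lemma sO_free_mono:
  assumes free: "sO_free t V E" and "t \<le> s" shows "sO_free s V E"
  unfolding sO_free_def
proof
  assume "\<exists>Cs. length Cs = s \<and> (\<forall>C\<in>set Cs. is_cycle V E C) \<and>
     (\<forall>i<s. \<forall>j<s. i \<noteq> j \<longrightarrow> anticomplete E (set (Cs ! i)) (set (Cs ! j)))"
  then obtain Cs where Cs: "length Cs = s" "\<forall>C\<in>set Cs. is_cycle V E C"
    "\<forall>i<s. \<forall>j<s. i \<noteq> j \<longrightarrow> anticomplete E (set (Cs ! i)) (set (Cs ! j))" by blast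
  have "length (take t Cs) = t" using Cs(1) \<open>t \<le> s\<close> by simp
  moreover have "\<forall>C\<in>set (take t Cs). is_cycle V E C"
    using Cs(2) set_take_subset[of t Cs] by blast
  moreover have "anticomplete E (set (take t Cs ! i)) (set (take t Cs ! j))"
    if "i < t" "j < t" "i \<noteq> j" for i j
    using Cs(3) that \<open>t \<le> s\<close> by simp
  ultimately show False using free unfolding sO_free_def by blast
qed

lemma sO_free_outside_cycle:
  assumes G: "graph V E" "sO_free (Suc t) V E" and q: "is_cycle V E q"
  defines "W \<equiv> outside_nbhd V E (set q)"
  shows "sO_free t W (induced_edges E W)"
  unfolding sO_free_def
proof
  interpret induced_embedding id W "induced_edges E W" V E
    unfolding W_def by (rule induced_embedding_subset[OF outside_nbhd_subset])
  assume "\<exists>Cs. length Cs = t \<and> (\<forall>C\<in>set Cs. is_cycle W (induced_edges E W) C) \<and>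
     (\<forall>i<t. \<forall>j<t. i \<noteq> j \<longrightarrow> anticomplete (induced_edges E W) (set (Cs ! i)) (set (Cs ! j)))"
  then obtain Cs where Cs: "length Cs = t" "\<forall>C\<in>set Cs. is_cycle W (induced_edges E W) C"
    "\<forall>i<t. \<forall>j<t. i \<noteq> j \<longrightarrow> anticomplete (induced_edges E W) (set (Cs ! i)) (set (Cs ! j))"
    by blast
  have W: "set C \<subseteq> W" if "C \<in> set Cs" for C using Cs(2) that unfolding is_cycle_def by blast
  have cycles: "\<forall>C\<in>set (q # Cs). is_cycle V E C" using q Cs(2) is_cycle_map by fastforce
  have q_anti: "anticomplete E (set q) (set C)" if "C \<in> set Cs" for C
    using W[OF that] unfolding anticomplete_def W_def outside_nbhd_def closed_nbhd_def by blast
  have Cs_anti: "anticomplete E (set (Cs ! i)) (set (Cs ! j))" if "i < t" "j < t" "i \<noteq> j" for i j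
    using anticomplete_image[OF Cs(3)[rule_format, OF that] W W] that Cs(1) by simp
  have "anticomplete E (set ((q # Cs) ! i)) (set ((q # Cs) ! j))"
    if ij: "i < Suc t" "j < Suc t" "i \<noteq> j" for i j
  proof (cases i)
    case 0
    then obtain j' where "j = Suc j'" "j' < t" using ij 0 by (cases j) auto
    then show ?thesis using 0 q_anti[of "Cs ! j'"] Cs(1) by simp
  next
    case (Suc i')
    show ?thesis
    proof (cases j)
      case 0
      then show ?thesis
        using Suc ij q_anti[of "Cs ! i'"] Cs(1) anticomplete_sym[OF G(1)] by simp
    next
      case (Suc j')
      then show ?thesis using \<open>i = Suc i'\<close> ij Cs_anti[of i' j'] by simp
    qed
  qed
  then have "length (q # Cs) = Suc t \<and> (\<forall>C\<in>set (q # Cs). is_cycle V E C) \<and>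
      (\<forall>i<Suc t. \<forall>j<Suc t. i \<noteq> j \<longrightarrow>
         anticomplete E (set ((q # Cs) ! i)) (set ((q # Cs) ! j)))"
    using Cs(1) cycles by simp
  then show False using G(2) unfolding sO_free_def by blast
qed

section \<open>Forests\<close>

definition is_path :: "'a set \<Rightarrow> ('a \<Rightarrow> 'a \<Rightarrow> bool) \<Rightarrow> 'a list \<Rightarrow> bool" where
  "is_path V E P \<longleftrightarrow> P \<noteq> [] \<and> distinct P \<and> set P \<subseteq> V \<and> successively E P"

lemma ordered_induced_path_is_path: "ordered_induced_path V E P \<Longrightarrow> is_path V E P"
  unfolding ordered_induced_path_def is_path_def successively_conv_nth by auto

lemma successively_obtain_distinct:
  "successively R zs \<Longrightarrow> zs \<noteq> [] \<Longrightarrow> \<exists>ys. distinct ys \<and> successively R ys \<and> ys \<noteq> [] \<and>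
     hd ys = hd zs \<and> last ys = last zs \<and> set ys \<subseteq> set zs"
proof (induction "length zs" arbitrary: zs rule: less_induct)
  case less
  show ?case
  proof (cases "distinct zs")
    case False
    then obtain a b c y where zs: "zs = a @ [y] @ b @ [y] @ c" using not_distinct_decomp by blast
    define zs' where "zs' = a @ [y] @ c"
    have "successively R ((a @ [y]) @ (b @ (y # c)))" using less.prems(1) unfolding zs by simp
    then have "successively R (a @ [y])" "successively R (y # c)"
      unfolding successively_append_iff by auto
    then have "successively R ((a @ [y]) @ c)"
      unfolding successively_append_iff by (auto simp: successively_Cons)
    then have "successively R zs'" unfolding zs'_def by simp
    moreover have "length zs' < length zs" "zs' \<noteq> []" unfolding zs'_def zs by simp_all
    moreover have "hd zs' = hd zs" "last zs' = last zs" "set zs' \<subseteq> set zs"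
      unfolding zs'_def zs by (cases a; cases c; auto)+
    ultimately show ?thesis using less.hyps by (metis order_trans)
  qed (use less.prems in blast)
qed

lemma is_cycle_ConsI:
  assumes "is_path V E ys" "length ys \<ge> 2" "u \<in> V" "u \<notin> set ys"
    "E u (hd ys)" "E (last ys) u"
  shows "is_cycle V E (u # ys)"
proof -
  have "E ((u # ys) ! i) ((u # ys) ! (Suc i mod length (u # ys)))" if i: "i < length (u # ys)" for i
  proof -
    consider "i = 0" | "i = length ys" | i' where "i = Suc i'" "Suc i' < length ys"
      using i by (metis Suc_lessI length_Cons less_Suc_eq_0_disj)
    then show ?thesis
    proof cases
      case 1
      then show ?thesis using assms(2,5) by (cases ys) auto
    next
      case 2
      then show ?thesis using assms(2,6) by (cases ys rule: rev_cases) (auto simp: nth_append)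
    next
      case 3
      then show ?thesis using assms(1) successively_nth unfolding is_path_def by fastforce
    qed
  qed
  then show ?thesis using assms unfolding is_cycle_def is_path_def by auto
qed

lemma is_cycle_of_forked_paths:
  assumes G: "graph V E" and R: "is_path V E R" and R': "is_path V E R'"
    and heads: "hd R \<noteq> hd R'" and lasts: "last R = last R'"
    and a: "a \<in> V" "a \<notin> set R" "a \<notin> set R'" "E a (hd R)" "E a (hd R')"
  obtains C where "is_cycle V E C"
proof -
  \<comment> \<open>The reflexive closure absorbs the common last vertex, which occurs twice in R @ rev R'.\<close>
  define R0 where "R0 = (\<lambda>x y. x = y \<or> E x y)"
  have "successively R0 R" "successively R0 (rev R')"
    using R R' graph_sym[OF G] unfolding is_path_def R0_def
    by (auto intro: successively_mono)
  then have "successively R0 (R @ rev R')"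
    using R R' lasts unfolding is_path_def by (auto simp: successively_append_iff R0_def hd_rev)
  moreover have "R @ rev R' \<noteq> []" "hd (R @ rev R') = hd R" "last (R @ rev R') = hd R'"
    "set (R @ rev R') = set R \<union> set R'"
    using R R' unfolding is_path_def by (auto simp: last_rev)
  ultimately obtain ys where ys: "distinct ys" "successively R0 ys" "ys \<noteq> []"
    "hd ys = hd R" "last ys = hd R'" "set ys \<subseteq> set R \<union> set R'"
    using successively_obtain_distinct by metis
  have "successively E ys"
    using ys(1,2) unfolding R0_def
  proof (induction ys)
    case (Cons x xs)
    then show ?case by (cases xs) (auto simp: successively_Cons)
  qed simp
  then have "is_path V E ys" using ys R R' unfolding is_path_def by auto
  moreover have "length ys \<ge> 2"
    using ys(3-5) heads by (cases ys rule: remdups_adj.cases) auto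
  ultimately have "is_cycle V E (a # ys)"
    using a ys(4-6) graph_sym[OF G] by (intro is_cycle_ConsI) auto
  then show ?thesis using that by blast
qed

lemma acyclic_path_unique:
  assumes G: "graph V E" and acyclic: "\<And>C. \<not> is_cycle V E C"
  shows "is_path V E P \<Longrightarrow> is_path V E Q \<Longrightarrow> hd P = hd Q \<Longrightarrow> last P = last Q \<Longrightarrow> P = Q"
proof (induction P arbitrary: Q)
  case (Cons a R)
  obtain R' where Q: "Q = a # R'" using Cons.prems(2,3) unfolding is_path_def by (cases Q) auto
  have not_in: "a \<notin> set R" "a \<notin> set R'" using Cons.prems(1,2) Q unfolding is_path_def by auto
  show ?case
  proof (cases "R = [] \<or> R' = []")
    case True
    then show ?thesis using Cons.prems(4) Q not_in by (metis last.simps last_in_set)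
  next
    case False
    then have paths: "is_path V E R" "is_path V E R'"
      using Cons.prems(1,2) Q unfolding is_path_def by (auto simp: successively_Cons)
    have edges: "E a (hd R)" "E a (hd R')"
      using Cons.prems(1,2) Q False unfolding is_path_def by (auto simp: successively_Cons)
    have "last R = last R'" using Cons.prems(4) Q False by simp
    then have "hd R = hd R'"
      using is_cycle_of_forked_paths[OF G paths] Cons.prems(1) not_in edges acyclic
      unfolding is_path_def by auto
    then show ?thesis using Cons.IH paths \<open>last R = last R'\<close> Q by simp
  qed
qed (simp add: is_path_def)

lemma num_oip_forest:
  assumes G: "graph V E" and "sO_free 1 V E"
  shows "num_oip V E \<le> card V ^ 2"
proof -
  have acyclic: "\<not> is_cycle V E C" for C
    using assms(2) unfolding sO_free_def by (metis One_nat_def length_Cons less_one list.size(3)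
        set_ConsD set_empty2 empty_iff)
  have "finite V" using G unfolding graph_def by blast
  have "num_oip V E \<le> card (V \<times> V)" unfolding num_oip_def
  proof (rule card_inj_on_le)
    show "inj_on (\<lambda>P. (hd P, last P)) {P. ordered_induced_path V E P}"
      using acyclic_path_unique[OF G acyclic] ordered_induced_path_is_path by (fastforce intro: inj_onI)
    show "(\<lambda>P. (hd P, last P)) ` {P. ordered_induced_path V E P} \<subseteq> V \<times> V"
      unfolding ordered_induced_path_def by auto
  qed (use \<open>finite V\<close> in simp)
  then show ?thesis by (simp add: card_cartesian_product power2_eq_square)
qed

section \<open>Splitting a path at a 4-cycle\<close>

definition C4_vertex_sets :: "'a set \<Rightarrow> ('a \<Rightarrow> 'a \<Rightarrow> bool) \<Rightarrow> 'a set set" where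
  "C4_vertex_sets V E = {set q | q. is_cycle V E q \<and> length q = 4}"

definition paths_outside :: "'a set \<Rightarrow> ('a \<Rightarrow> 'a \<Rightarrow> bool) \<Rightarrow> 'a set \<Rightarrow> 'a list set" where
  "paths_outside V E X =
     {P. ordered_induced_path (outside_nbhd V E X) (induced_edges E (outside_nbhd V E X)) P}"

definition C4_free_paths_outside :: "'a set \<Rightarrow> ('a \<Rightarrow> 'a \<Rightarrow> bool) \<Rightarrow> 'a set \<Rightarrow> 'a list set" where
  "C4_free_paths_outside V E X =
     (if no_C4 (outside_nbhd V E X) (induced_edges E (outside_nbhd V E X))
      then paths_outside V E X else {})"

text \<open>Candidates for the part of a path before its final segment with vertex set X: empty, or a
  vertex y preceded by a (possibly empty) induced path of G - N[X].\<close>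
definition head_pieces :: "'a set \<Rightarrow> ('a \<Rightarrow> 'a \<Rightarrow> bool) \<Rightarrow> 'a set \<Rightarrow> 'a list set" where
  "head_pieces V E X =
     insert [] ((\<lambda>(Q, y). Q @ [y]) ` (insert [] (C4_free_paths_outside V E X) \<times> V))"

definition split_paths :: "'a set \<Rightarrow> ('a \<Rightarrow> 'a \<Rightarrow> bool) \<Rightarrow> 'a set \<Rightarrow> 'a list set" where
  "split_paths V E A = (\<Union>P2\<in>insert [] (paths_outside V E A). \<Union>x\<in>V.
     (\<lambda>Pf. Pf @ x # P2) ` head_pieces V E (insert x (set P2)))"

lemma induced_edges_self: "graph V E \<Longrightarrow> induced_edges E V = E"
  unfolding induced_edges_def graph_def by blast

lemma ordered_induced_path_in_paths_outside:
  "ordered_induced_path V E P \<Longrightarrow> set P \<inter> closed_nbhd E X = {} \<Longrightarrow> P \<in> paths_outside V E X"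
  unfolding paths_outside_def outside_nbhd_def mem_Collect_eq
  by (rule ordered_induced_path_induced_edges) (auto simp: ordered_induced_path_def)

lemma C4_vertex_set_outside:
  assumes G: "graph V E"
    and "\<not> no_C4 (outside_nbhd V E X) (induced_edges E (outside_nbhd V E X))"
  obtains A where "A \<in> C4_vertex_sets V E" "A \<inter> closed_nbhd E X = {}"
proof -
  define W where "W = outside_nbhd V E X"
  interpret induced_embedding id W "induced_edges E W" V E
    unfolding W_def by (rule induced_embedding_subset[OF outside_nbhd_subset])
  obtain q where q: "is_cycle W (induced_edges E W) q" "length q = 4"
    using assms(2) unfolding no_C4_def W_def by blast
  have "set q \<in> C4_vertex_sets V E"
    using is_cycle_map[OF q(1)] q(2) unfolding C4_vertex_sets_def by auto
  moreover have "set q \<inter> closed_nbhd E X = {}"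
    using q(1) unfolding is_cycle_def W_def outside_nbhd_def by blast
  ultimately show ?thesis using that by blast
qed

lemma ordered_induced_path_take_drop_apart:
  assumes P: "ordered_induced_path V E P"
  shows "set (take i P) \<inter> closed_nbhd E (set (drop (Suc i) P)) = {}"
proof -
  have "P ! k \<noteq> P ! m \<and> \<not> E (P ! m) (P ! k)" if "k < i" "Suc i \<le> m" "m < length P" for k m
    using P that nth_eq_iff_index_eq[of P k m] unfolding ordered_induced_path_def by auto
  then show ?thesis
    unfolding closed_nbhd_def by (fastforce simp: in_set_conv_nth)
qed

lemma take_in_head_pieces:
  assumes P: "ordered_induced_path V E P" and "i < length P"
    and "no_C4 (outside_nbhd V E (set (drop i P))) (induced_edges E (outside_nbhd V E (set (drop i P))))"
  shows "take i P \<in> head_pieces V E (set (drop i P))"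
proof (cases i)
  case (Suc k)
  then have take_i: "take i P = take k P @ [P ! k]"
    using \<open>i < length P\<close> take_Suc_conv_app_nth[of k P] by simp
  have "take k P = [] \<or> take k P \<in> paths_outside V E (set (drop i P))"
    using ordered_induced_path_in_paths_outside[OF ordered_induced_path_take[OF P]]
      ordered_induced_path_take_drop_apart[OF P, of k] Suc by blast
  then have "take k P \<in> insert [] (C4_free_paths_outside V E (set (drop i P)))"
    using assms(3) unfolding C4_free_paths_outside_def by auto
  moreover have "P ! k \<in> V" using P Suc \<open>i < length P\<close> nth_mem
    unfolding ordered_induced_path_def by fastforce
  ultimately have "take k P @ [P ! k] \<in>
      (\<lambda>(Q, y). Q @ [y]) ` (insert [] (C4_free_paths_outside V E (set (drop i P))) \<times> V)"
    by (intro image_eqI[where x = "(take k P, P ! k)"]) auto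
  then show ?thesis unfolding head_pieces_def take_i by blast
qed (simp add: head_pieces_def)

lemma ordered_induced_path_decomp:
  assumes G: "graph V E" and "\<not> no_C4 V E" and P: "ordered_induced_path V E P"
  shows "\<exists>A\<in>C4_vertex_sets V E. P \<in> paths_outside V E A \<union> split_paths V E A"
proof -
  define far where
    "far j \<longleftrightarrow> \<not> no_C4 (outside_nbhd V E (set (drop j P)))
                       (induced_edges E (outside_nbhd V E (set (drop j P))))" for j
  have "far (length P)"
    using assms(2) induced_edges_self[OF G] unfolding far_def outside_nbhd_def closed_nbhd_def
    by simp
  define j0 where "j0 = (LEAST j. far j)"
  have "far j0" "j0 \<le> length P"
    using LeastI[of far] Least_le[of far] \<open>far (length P)\<close> unfolding j0_def by blast+
  then obtain A where A: "A \<in> C4_vertex_sets V E" "A \<inter> closed_nbhd E (set (drop j0 P)) = {}"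
    using C4_vertex_set_outside[OF G] unfolding far_def by blast
  have PV: "set P \<subseteq> V" using P unfolding ordered_induced_path_def by blast
  have tail: "drop j0 P \<in> insert [] (paths_outside V E A)"
    using ordered_induced_path_drop[OF P] ordered_induced_path_in_paths_outside
      disjoint_closed_nbhd_sym[OF G A(2)] by blast
  show ?thesis
  proof (cases "j0 = 0")
    case True
    then show ?thesis using A(1) tail P unfolding ordered_induced_path_def by auto
  next
    case False
    define x P2 Pf where "x = P ! (j0 - 1)" and "P2 = drop j0 P" and "Pf = take (j0 - 1) P"
    have j0: "j0 - 1 < length P" using False \<open>j0 \<le> length P\<close> by simp
    then have x_P2: "drop (j0 - 1) P = x # P2"
      unfolding x_def P2_def using Cons_nth_drop_Suc False by fastforce
    have "P = Pf @ x # P2" unfolding Pf_def x_P2[symmetric] by simp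
    moreover have "x \<in> V" unfolding x_def using j0 PV nth_mem by blast
    moreover have "Pf \<in> head_pieces V E (insert x (set P2))"
    proof -
      have "j0 - 1 < j0" using \<open>j0 \<noteq> 0\<close> by simp
      then have "\<not> far (j0 - 1)" using not_less_Least unfolding j0_def by blast
      then show ?thesis
        using take_in_head_pieces[OF P j0] x_P2 unfolding far_def Pf_def by simp
    qed
    ultimately show ?thesis using A(1) tail unfolding split_paths_def P2_def by blast
  qed
qed

section \<open>Counting\<close>

lemma finite_C4_vertex_sets: "finite V \<Longrightarrow> finite (C4_vertex_sets V E)"
  unfolding C4_vertex_sets_def is_cycle_def
  by (rule finite_subset[of _ "Pow V"]) auto

lemma card_C4_vertex_sets:
  assumes "finite V" shows "24 * card (C4_vertex_sets V E) \<le> card V ^ 4"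
proof -
  have "C4_vertex_sets V E \<subseteq> {B. B \<subseteq> V \<and> card B = 4}"
    unfolding C4_vertex_sets_def is_cycle_def by (auto simp: distinct_card)
  then have "card (C4_vertex_sets V E) \<le> card {B. B \<subseteq> V \<and> card B = 4}"
    using assms by (intro card_mono) auto
  then have "card (C4_vertex_sets V E) \<le> card V choose 4" using n_subsets[OF assms] by simp
  then have "card (C4_vertex_sets V E) * fact 4 \<le> (card V choose 4) * fact 4" by simp
  also have "\<dots> \<le> card V ^ 4" by (rule binomial_fact_pow)
  finally show ?thesis by (simp add: fact_numeral)
qed

lemma finite_paths_outside: "finite V \<Longrightarrow> finite (paths_outside V E X)"
  unfolding paths_outside_def outside_nbhd_def by (simp add: finite_ordered_induced_paths)

lemma finite_head_pieces:
  assumes "finite V" shows "finite (head_pieces V E X)"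
proof -
  have "finite (C4_free_paths_outside V E X)"
    using finite_paths_outside[OF assms] unfolding C4_free_paths_outside_def by simp
  then show ?thesis unfolding head_pieces_def using assms by simp
qed

lemma card_head_pieces:
  assumes "finite V" "card (C4_free_paths_outside V E X) \<le> b"
  shows "card (head_pieces V E X) \<le> 1 + (b + 1) * card V"
proof -
  let ?T = "insert [] (C4_free_paths_outside V E X)"
  have "finite (C4_free_paths_outside V E X)"
    using finite_paths_outside[OF assms(1)] unfolding C4_free_paths_outside_def by simp
  then have "finite ?T" "card ?T \<le> b + 1" using assms(2) by (simp_all add: card_insert_if)
  have "card (head_pieces V E X) \<le> 1 + card ((\<lambda>(Q, y). Q @ [y]) ` (?T \<times> V))"
    unfolding head_pieces_def using \<open>finite ?T\<close> assms(1) by (simp add: card_insert_if)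
  also have "\<dots> \<le> 1 + card (?T \<times> V)"
    using card_image_le[OF finite_cartesian_product[OF \<open>finite ?T\<close> assms(1)]] by simp
  also have "\<dots> \<le> 1 + (b + 1) * card V"
    using mult_le_mono1[OF \<open>card ?T \<le> b + 1\<close>] by (simp add: card_cartesian_product)
  finally show ?thesis .
qed

lemma card_UN_le_mult:
  assumes "finite I" "\<And>i. i \<in> I \<Longrightarrow> card (B i) \<le> M"
  shows "card (\<Union>i\<in>I. B i) \<le> card I * M"
proof -
  have "card (\<Union>i\<in>I. B i) \<le> (\<Sum>i\<in>I. card (B i))" using card_UN_le[OF assms(1)] .
  also have "\<dots> \<le> card I * M" using sum_bounded_above[of I "\<lambda>i. card (B i)" M] assms(2) by simp
  finally show ?thesis .
qed

lemma finite_split_paths: "finite V \<Longrightarrow> finite (split_paths V E A)"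
  unfolding split_paths_def using finite_paths_outside finite_head_pieces
  by (intro finite_UN_I finite_imageI) auto

lemma card_split_paths:
  assumes "finite V" "card (paths_outside V E A) \<le> a"
    and "\<And>X. card (C4_free_paths_outside V E X) \<le> b"
  defines "n \<equiv> card V"
  shows "card (split_paths V E A) \<le> (a + 1) * (n * (1 + (b + 1) * n))"
proof -
  have piece: "card ((\<lambda>Pf. Pf @ x # P2) ` head_pieces V E (insert x (set P2)))
      \<le> 1 + (b + 1) * card V" for x P2
    using card_image_le[OF finite_head_pieces[OF assms(1)]] card_head_pieces[OF assms(1,3)]
    by (rule order_trans)
  have "card (\<Union>x\<in>V. (\<lambda>Pf. Pf @ x # P2) ` head_pieces V E (insert x (set P2)))
      \<le> n * (1 + (b + 1) * n)" for P2
    unfolding n_def by (rule card_UN_le_mult[OF assms(1) piece])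
  then have "card (split_paths V E A)
      \<le> card (insert [] (paths_outside V E A)) * (n * (1 + (b + 1) * n))"
    unfolding split_paths_def using finite_paths_outside[OF assms(1)]
    by (intro card_UN_le_mult) auto
  also have "\<dots> \<le> (a + 1) * (n * (1 + (b + 1) * n))"
    using assms(2) finite_paths_outside[OF assms(1)]
    by (intro mult_le_mono1) (simp add: card_insert_if)
  finally show ?thesis .
qed

lemma num_oip_le_C4_count:
  assumes G: "graph V E" and "\<not> no_C4 V E"
    and bound_A: "\<And>A. A \<in> C4_vertex_sets V E \<Longrightarrow> card (paths_outside V E A) \<le> a"
    and bound_X: "\<And>X. card (C4_free_paths_outside V E X) \<le> b"
  defines "F \<equiv> card (C4_vertex_sets V E)" and "n \<equiv> card V"
  shows "num_oip V E \<le> F * (a + (a + 1) * (n * (1 + (b + 1) * n)))"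
proof -
  have fin: "finite V" using G unfolding graph_def by blast
  let ?U = "\<Union>A\<in>C4_vertex_sets V E. paths_outside V E A \<union> split_paths V E A"
  have "{P. ordered_induced_path V E P} \<subseteq> ?U"
    using ordered_induced_path_decomp[OF G assms(2)] by blast
  moreover have "finite ?U"
    using finite_C4_vertex_sets[OF fin] finite_paths_outside[OF fin] finite_split_paths[OF fin]
    by (intro finite_UN_I finite_UnI) auto
  ultimately have "num_oip V E \<le> card ?U" unfolding num_oip_def by (rule card_mono[rotated])
  also have "\<dots> \<le> F * (a + (a + 1) * (n * (1 + (b + 1) * n)))"
    unfolding F_def
  proof (rule card_UN_le_mult[OF finite_C4_vertex_sets[OF fin]])
    fix A assume "A \<in> C4_vertex_sets V E"
    then have "card (paths_outside V E A) \<le> a"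
      "card (split_paths V E A) \<le> (a + 1) * (n * (1 + (b + 1) * n))"
      using bound_A card_split_paths[OF fin _ bound_X] unfolding n_def by blast+
    then show "card (paths_outside V E A \<union> split_paths V E A)
        \<le> a + (a + 1) * (n * (1 + (b + 1) * n))"
      using card_Un_le[of "paths_outside V E A" "split_paths V E A"] by linarith
  qed
  finally show ?thesis .
qed

lemma C4_count_arith:
  fixes n F a b :: nat
  assumes "4 \<le> n" "1 \<le> a" "n \<le> b" "24 * F \<le> n ^ 4"
  shows "F * (a + (a + 1) * (n * (1 + (b + 1) * n))) \<le> n ^ 4 * (a * b * n ^ 2)"
proof -
  define p where "p = a * b * n ^ 2"
  have "n \<le> n ^ 2" "2 * n ^ 2 \<le> b * n ^ 2"
    using assms(1,3) by (simp_all add: power2_eq_square)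
  then have "n + n ^ 2 \<le> b * n ^ 2" by linarith
  then have "n * (1 + (b + 1) * n) \<le> 2 * (b * n ^ 2)"
    by (simp add: algebra_simps power2_eq_square)
  moreover have "a + 1 \<le> 2 * a" using assms(2) by simp
  ultimately have "(a + 1) * (n * (1 + (b + 1) * n)) \<le> (2 * a) * (2 * (b * n ^ 2))"
    using mult_le_mono by blast
  moreover have "(2 * a) * (2 * (b * n ^ 2)) = 4 * p" unfolding p_def by simp
  moreover have "a \<le> p" unfolding p_def using assms by simp
  ultimately have "F * (a + (a + 1) * (n * (1 + (b + 1) * n))) \<le> F * (5 * p)"
    by (intro mult_le_mono2) linarith
  moreover have "24 * F * p \<le> n ^ 4 * p" by (rule mult_le_mono1[OF assms(4)])
  ultimately have "24 * (F * (a + (a + 1) * (n * (1 + (b + 1) * n)))) \<le> 24 * (n ^ 4 * p)"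
    by linarith
  then show ?thesis unfolding p_def by (simp add: algebra_simps)
qed

lemma card_paths_outside_cycle:
  fixes V :: "'a set"
  assumes G: "graph V E" and free: "sO_free (Suc t) V E" and "is_cycle V E q"
    and IH: "\<And>(W :: 'a set) E'. graph W E' \<Longrightarrow> sO_free t W E' \<Longrightarrow> num_oip W E' \<le> card W ^ d"
  shows "card (paths_outside V E (set q)) \<le> card V ^ d"
proof -
  let ?W = "outside_nbhd V E (set q)"
  have "card (paths_outside V E (set q)) \<le> card ?W ^ d"
    using IH[OF graph_induced_edges[OF G outside_nbhd_subset] sO_free_outside_cycle[OF assms(1-3)]]
    unfolding paths_outside_def num_oip_def .
  also have "\<dots> \<le> card V ^ d"
    using G power_mono[OF card_mono[OF _ outside_nbhd_subset]] unfolding graph_def by blast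
  finally show ?thesis .
qed

lemma card_C4_free_paths_outside:
  fixes V :: "'a set"
  assumes G: "graph V E" and free: "sO_free s V E"
    and bound: "\<And>(W :: 'a set) E'. graph W E' \<Longrightarrow> sO_free s W E' \<Longrightarrow> no_C4 W E'
      \<Longrightarrow> num_oip W E' \<le> card W ^ c"
  shows "card (C4_free_paths_outside V E X) \<le> card V ^ c"
proof (cases "no_C4 (outside_nbhd V E X) (induced_edges E (outside_nbhd V E X))")
  case True
  interpret induced_embedding id "outside_nbhd V E X" "induced_edges E (outside_nbhd V E X)" V E
    by (rule induced_embedding_subset[OF outside_nbhd_subset])
  have "card (C4_free_paths_outside V E X) \<le> card (outside_nbhd V E X) ^ c"
    using bound[OF graph_induced_edges[OF G outside_nbhd_subset] sO_free_reflect[OF free] True] True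
    unfolding C4_free_paths_outside_def paths_outside_def num_oip_def by simp
  also have "\<dots> \<le> card V ^ c"
    using G power_mono[OF card_mono[OF _ outside_nbhd_subset]] unfolding graph_def by blast
  finally show ?thesis .
qed (simp add: C4_free_paths_outside_def)

lemma num_oip_le_step:
  fixes V :: "'a set"
  assumes G: "graph V E" and free: "sO_free (Suc t) V E" and "1 \<le> c"
    and IH: "\<And>(W :: 'a set) E'. graph W E' \<Longrightarrow> sO_free t W E' \<Longrightarrow> num_oip W E' \<le> card W ^ d"
    and C4_free_bound: "\<And>(W :: 'a set) E'. graph W E' \<Longrightarrow> sO_free (Suc t) W E' \<Longrightarrow> no_C4 W E'
            \<Longrightarrow> num_oip W E' \<le> card W ^ c"
  shows "num_oip V E \<le> card V ^ (d + c + 6)"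
proof -
  define n where "n = card V"
  have fin: "finite V" using G unfolding graph_def by blast
  show ?thesis
  proof (cases "no_C4 V E")
    case True
    then have "num_oip V E \<le> n ^ c" using C4_free_bound[OF G free] n_def by simp
    moreover have "n ^ c \<le> n ^ (d + c + 6)"
      using \<open>1 \<le> c\<close> by (cases "n = 0") (simp_all add: power_increasing power_0_left)
    ultimately show ?thesis unfolding n_def by simp
  next
    case False
    then obtain q where "is_cycle V E q" "length q = 4" unfolding no_C4_def by blast
    then have "card (set q) = 4" "set q \<subseteq> V" unfolding is_cycle_def by (simp_all add: distinct_card)
    then have "4 \<le> n" unfolding n_def using card_mono[OF fin] by metis
    have "num_oip V E
        \<le> card (C4_vertex_sets V E) * (n ^ d + (n ^ d + 1) * (n * (1 + (n ^ c + 1) * n)))"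
      using num_oip_le_C4_count[OF G False _ card_C4_free_paths_outside[OF G free C4_free_bound]]
        card_paths_outside_cycle[OF G free _ IH]
      unfolding n_def C4_vertex_sets_def by blast
    also have "\<dots> \<le> n ^ 4 * (n ^ d * n ^ c * n ^ 2)"
    proof (rule C4_count_arith[OF \<open>4 \<le> n\<close>])
      show "1 \<le> n ^ d" using \<open>4 \<le> n\<close> by simp
      show "n \<le> n ^ c" using power_increasing[OF \<open>1 \<le> c\<close>, of n] \<open>4 \<le> n\<close> by simp
      show "24 * card (C4_vertex_sets V E) \<le> n ^ 4" using card_C4_vertex_sets[OF fin] n_def by simp
    qed
    also have "\<dots> = n ^ (d + c + 6)" by (simp add: power_add power_numeral_reduce algebra_simps)
    finally show ?thesis unfolding n_def .
  qed
qed

lemma num_oip_le_induct: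
  assumes bound: "\<forall>(V :: nat set) E. graph V E \<and> sO_free s V E \<and> no_C4 V E
           \<longrightarrow> num_oip V E \<le> card V ^ c" and "1 \<le> c"
  shows "1 \<le> t \<Longrightarrow> t \<le> s \<Longrightarrow> graph (V :: 'a set) E \<Longrightarrow> sO_free t V E \<Longrightarrow>
    num_oip V E \<le> card V ^ (2 + (t - 1) * (c + 6))"
proof (induction t arbitrary: V E)
  case (Suc t)
  show ?case
  proof (cases "t = 0")
    case True
    then show ?thesis using num_oip_forest Suc.prems(3,4) by simp
  next
    case False
    have exponent: "2 + (Suc t - 1) * (c + 6) = (2 + (t - 1) * (c + 6)) + c + 6"
      using False by (cases t) (auto simp: algebra_simps)
    show ?thesis unfolding exponent
    proof (rule num_oip_le_step[OF Suc.prems(3,4) \<open>1 \<le> c\<close>])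
      show "num_oip W E' \<le> card W ^ (2 + (t - 1) * (c + 6))" if "graph W E'" "sO_free t W E'"
        for W :: "'a set" and E'
        using Suc.IH that False Suc.prems(2) by simp
      show "num_oip W E' \<le> card W ^ c" if "graph W E'" "sO_free (Suc t) W E'" "no_C4 W E'"
        for W :: "'a set" and E'
        using num_oip_bound_transfer_nat[OF bound that(1) sO_free_mono[OF that(2) Suc.prems(2)]
            that(3)] .
    qed
  qed
qed simp

theorem mainTheorem4:
  fixes s c :: nat
  assumes "s \<ge> 1" and "c \<ge> 1"
    and "\<forall>(V :: nat set) E. graph V E \<and> sO_free s V E \<and> no_C4 V E
           \<longrightarrow> num_oip V E \<le> card V ^ c"
  shows "\<forall>(V :: 'a set) E. graph V E \<and> sO_free s V E
           \<longrightarrow> num_oip V E \<le> card V ^ (2 + (s - 1) * (c + 6))"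
  using num_oip_le_induct[OF assms(3,2) assms(1) order_refl] by blast

end
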